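(* Let $C$ be a monotone normalized cost function and let $H:2^{M_1}\times\cdots\times2^{M_n}\to\mathbb{R}_{\ge0}\cup\{\infty\}$ be normalized ($H(\vec\emptyset)=0$) and monotone. Let $\mathcal A$ be the VCG-based mechanism with function $H$, defined on a valuation domain that contains all additive valuations, and suppose that $\mathcal A$ always covers the cost on this domain. Then $H(\vec S)\ge P_C(\vec S)$ for every allocation $\vec S$.
   Context: Setting. $N=\{1,\dots,n\}$ is a set of players and $M_1,\dots,M_n$ are pairwise disjoint finite sets; $M=\bigcup_i M_i$. An allocation is a vector $\vec S=(S_1,\dots,S_n)$ with $S_i\subseteq M_i$, identified with $\bigcup_iS_i\subseteq M$; $\vec\emptyset=(\emptyset,\dots,\emptyset)$. A cost function is a monotone $C:2^M\to\mathbb{R}_{\ge0}$ with $C(\emptyset)=0$; valuations $v_i:2^{M_i}\to\mathbb R_{\ge0}$ are monotone with $v_i(\emptyset)=0$; $v_i$ is additive if $v_i(S)=\sum_{j\in S}v_i(\{j\})$. The potential function is $P_C(\vec S)=\sum_{\emptyset\neq I\subseteq N}\frac{C(\bigcup_{i\in I}S_i)}{|I|\binom{n}{|I|}}$. The VCG-based mechanism with $H$ outputs $\overrightarrow{ALG}\in\arg\max_{\vec S}\sum_iv_i(S_i)-H(\vec S)$ (some tie-breaking), for each $i$ computes $\overrightarrow{ALG^{-i}}$ maximizing the same objective over allocations with $i$-th component $\emptyset$, and charges $p_i=\left[\sum_jv_j(ALG^{-i}_j)-H(\overrightarrow{ALG^{-i}})\right]-\left[\sum_{j\ne i}v_j(ALG_j)-H(\overrightarrow{ALG})\right]$.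 It always covers the cost if $\sum_ip_i\ge C(\overrightarrow{ALG})$ for every profile in the domain. *)

theory Defs
  imports "HOL-Analysis.Analysis" "HOL-Library.Extended_Real"
begin

definition allocs :: "nat \<Rightarrow> (nat \<Rightarrow> 'a set) \<Rightarrow> (nat \<Rightarrow> 'a set) set" where
  "allocs n M = {S. (\<forall>i<n. S i \<subseteq> M i) \<and> (\<forall>i\<ge>n. S i = {})}"

definition empty_alloc :: "nat \<Rightarrow> 'a set" where
  "empty_alloc = (\<lambda>i. {})"

definition alloc_union :: "nat \<Rightarrow> (nat \<Rightarrow> 'a set) \<Rightarrow> 'a set" where
  "alloc_union n S = (\<Union>i<n. S i)"

definition potential :: "nat \<Rightarrow> ('a set \<Rightarrow> real) \<Rightarrow> (nat \<Rightarrow> 'a set) \<Rightarrow> real" where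
  "potential n C S =
     (\<Sum>I\<in>{I. I \<subseteq> {..<n} \<and> I \<noteq> {}}.
        C (\<Union>i\<in>I. S i) / (real (card I) * real (n choose card I)))"

definition cost_function :: "nat \<Rightarrow> (nat \<Rightarrow> 'a set) \<Rightarrow> ('a set \<Rightarrow> real) \<Rightarrow> bool" where
  "cost_function n M C \<longleftrightarrow> C {} = 0 \<and>
     (\<forall>A. A \<subseteq> (\<Union>i<n. M i) \<longrightarrow> C A \<ge> 0) \<and>
     (\<forall>A B. A \<subseteq> B \<and> B \<subseteq> (\<Union>i<n. M i) \<longrightarrow> C A \<le> C B)"

definition valuation :: "'a set \<Rightarrow> ('a set \<Rightarrow> real) \<Rightarrow> bool" where
  "valuation Mi w \<longleftrightarrow> w {} = 0 \<and> (\<forall>A. A \<subseteq> Mi \<longrightarrow> w A \<ge> 0) \<and>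
     (\<forall>A B. A \<subseteq> B \<and> B \<subseteq> Mi \<longrightarrow> w A \<le> w B)"

definition additive_valuation :: "'a set \<Rightarrow> ('a set \<Rightarrow> real) \<Rightarrow> bool" where
  "additive_valuation Mi w \<longleftrightarrow> valuation Mi w \<and>
     (\<forall>A. A \<subseteq> Mi \<longrightarrow> w A = (\<Sum>j\<in>A. w {j}))"

definition welfare :: "nat \<Rightarrow> (nat \<Rightarrow> 'a set \<Rightarrow> real) \<Rightarrow> (nat \<Rightarrow> 'a set) \<Rightarrow> real" where
  "welfare n v S = (\<Sum>i<n. v i (S i))"

definition objective ::
  "nat \<Rightarrow> ((nat \<Rightarrow> 'a set) \<Rightarrow> ereal) \<Rightarrow> (nat \<Rightarrow> 'a set \<Rightarrow> real) \<Rightarrow> (nat \<Rightarrow> 'a set) \<Rightarrow> ereal" where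
  "objective n H v S = ereal (welfare n v S) - H S"

definition is_maximizer ::
  "nat \<Rightarrow> ((nat \<Rightarrow> 'a set) \<Rightarrow> ereal) \<Rightarrow> (nat \<Rightarrow> 'a set \<Rightarrow> real) \<Rightarrow> (nat \<Rightarrow> 'a set) set
     \<Rightarrow> (nat \<Rightarrow> 'a set) \<Rightarrow> bool" where
  "is_maximizer n H v A S \<longleftrightarrow> S \<in> A \<and> (\<forall>T\<in>A. objective n H v T \<le> objective n H v S)"

text \<open>VCG payment of player i, given the chosen allocation alg and the allocation algi
  chosen without player i.\<close>
definition vcg_payment ::
  "nat \<Rightarrow> ((nat \<Rightarrow> 'a set) \<Rightarrow> ereal) \<Rightarrow> (nat \<Rightarrow> 'a set \<Rightarrow> real) \<Rightarrow> (nat \<Rightarrow> 'a set)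
     \<Rightarrow> (nat \<Rightarrow> 'a set) \<Rightarrow> nat \<Rightarrow> ereal" where
  "vcg_payment n H v alg algi i =
     (ereal (welfare n v algi) - H algi)
     - (ereal (\<Sum>j\<in>{..<n} - {i}. v j (alg j)) - H alg)"

end

theory Submission
  imports Defs
begin

text \<open>Fix an allocation S with H S = h < \<infinity> and let every player value each of its own items
  in S at some L > h and everything else at 0 (an additive valuation). Then losing an item of S
  costs more than H can ever save, so the VCG mechanism allocates all of S at cost H S and,
  without player i, all of S with S i removed at cost H (S(i := {})); hence player i pays
  exactly H S - H (S(i := {})). Cost covering thus gives
  C (\<Union>i. S i) \<le> \<Sum>i. H S - H (S(i := {})), while the potential satisfies the same relation with
  equality. Induction on the number of players with S i \<noteq> {} then yields H \<ge> P.\<close>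

text \<open>The Shapley weight (k - 1)! (n - k)! / n!.\<close>
definition potential_weight :: "nat \<Rightarrow> nat \<Rightarrow> real" where
  "potential_weight n k = 1 / (real k * real (n choose k))"

definition set_potential :: "'b set \<Rightarrow> ('b set \<Rightarrow> real) \<Rightarrow> real" where
  "set_potential N f =
     (\<Sum>I\<in>Pow N - {{}}. potential_weight (card N) (card I) * f I)"

lemma potential_eq_set_potential:
  "potential n C S = set_potential {..<n} (\<lambda>I. C (\<Union>i\<in>I. S i))"
  unfolding potential_def set_potential_def potential_weight_def
  by (intro sum.cong) auto

lemma potential_weight_telescope:
  assumes "1 \<le> k" "k \<le> n"
  shows "real n * potential_weight n k
           - real (n - k) * (potential_weight n k + potential_weight n (k + 1))
         = (if k = n then 1 else 0)"
proof (cases "k = n")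
  case True
  then show ?thesis using assms by (simp add: potential_weight_def)
next
  case False
  then have "k < n" using assms by simp
  then have absorb: "real (k + 1) * real (n choose (k + 1)) = real (n - k) * real (n choose k)"
    by (metis Suc_eq_plus1 binomial_absorb_comp binomial_absorption of_nat_mult)
  have pos: "real (n choose k) > 0" "real (n - k) > 0" using \<open>k < n\<close> by simp_all
  have "real (n - k) * potential_weight n (k + 1) = 1 / real (n choose k)"
    using pos unfolding potential_weight_def absorb by simp
  moreover have "real n * potential_weight n k - real (n - k) * potential_weight n k
      = 1 / real (n choose k)"
    using pos assms \<open>k < n\<close> by (simp add: potential_weight_def field_simps)
  ultimately show ?thesis using False by (simp add: algebra_simps)
qed

lemma set_potential_delete:
  fixes f :: "'b set \<Rightarrow> real"
  assumes "finite N" "i \<in> N" "f {} = 0"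
  defines "w \<equiv> potential_weight (card N)"
  shows "set_potential N (\<lambda>I. f (I - {i}))
           = (\<Sum>I\<in>Pow N - {{}}. if i \<notin> I then (w (card I) + w (card I + 1)) * f I else 0)"
    (is "_ = ?rhs")
proof -
  define A where "A = {I \<in> Pow N - {{}}. i \<notin> I}"
  define B where "B = {I \<in> Pow N - {{}}. i \<in> I}"
  have finA: "finite A" and finB: "finite B" using \<open>finite N\<close> by (simp_all add: A_def B_def)
  have "bij_betw (insert i) (Pow (N - {i})) B"
    using \<open>i \<in> N\<close> by (rule_tac bij_betw_byWitness[where f'="\<lambda>I. I - {i}"]) (auto simp: B_def)
  then have "(\<Sum>I\<in>B. w (card I) * f (I - {i}))
      = (\<Sum>J\<in>Pow (N - {i}). w (card (insert i J)) * f (insert i J - {i}))"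
    by (rule sum.reindex_bij_betw[symmetric])
  also have "\<dots> = (\<Sum>J\<in>Pow (N - {i}). w (card J + 1) * f J)"
  proof (intro sum.cong refl)
    fix J assume "J \<in> Pow (N - {i})"
    then have "finite J" "i \<notin> J" using \<open>finite N\<close> finite_subset by auto
    then show "w (card (insert i J)) * f (insert i J - {i}) = w (card J + 1) * f J" by simp
  qed
  also have "Pow (N - {i}) = insert {} A" by (auto simp: A_def)
  also have "(\<Sum>J\<in>insert {} A. w (card J + 1) * f J) = (\<Sum>J\<in>A. w (card J + 1) * f J)"
    using finA \<open>f {} = 0\<close> by (simp add: sum.insert_if)
  finally have sumB: "(\<Sum>I\<in>B. w (card I) * f (I - {i})) = (\<Sum>J\<in>A. w (card J + 1) * f J)" .
  have "Pow N - {{}} = A \<union> B" "A \<inter> B = {}" by (auto simp: A_def B_def)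
  then have "set_potential N (\<lambda>I. f (I - {i}))
      = (\<Sum>I\<in>A. w (card I) * f (I - {i})) + (\<Sum>I\<in>B. w (card I) * f (I - {i}))"
    using finA finB by (simp add: set_potential_def w_def sum.union_disjoint)
  also have "(\<Sum>I\<in>A. w (card I) * f (I - {i})) = (\<Sum>I\<in>A. w (card I) * f I)"
    by (intro sum.cong) (auto simp: A_def)
  also have "\<dots> + (\<Sum>I\<in>B. w (card I) * f (I - {i})) = (\<Sum>I\<in>A. (w (card I) + w (card I + 1)) * f I)"
    by (simp add: sumB sum.distrib[symmetric] algebra_simps)
  also have "\<dots> = ?rhs"
    unfolding A_def using \<open>finite N\<close> by (intro sum.inter_filter) simp
  finally show ?thesis .
qed

lemma sum_set_potential_marginals:
  fixes f :: "'b set \<Rightarrow> real"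
  assumes "finite N" "f {} = 0"
  shows "(\<Sum>i\<in>N. set_potential N f - set_potential N (\<lambda>I. f (I - {i}))) = f N"
proof -
  define n where "n = card N"
  define w where "w = potential_weight n"
  define g where "g I = (w (card I) + w (card I + 1)) * f I" for I
  have card_I: "1 \<le> card I" "card I \<le> n" if "I \<in> Pow N - {{}}" for I
    using that \<open>finite N\<close> by (auto simp: n_def Suc_le_eq card_gt_0_iff finite_subset card_mono)
  have "(\<Sum>i\<in>N. set_potential N (\<lambda>I. f (I - {i})))
      = (\<Sum>i\<in>N. \<Sum>I\<in>Pow N - {{}}. if i \<notin> I then g I else 0)"
    unfolding g_def w_def n_def using assms by (intro sum.cong refl set_potential_delete)
  also have "\<dots> = (\<Sum>I\<in>Pow N - {{}}. \<Sum>i\<in>N. if i \<notin> I then g I else 0)"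
    by (rule sum.swap)
  also have "\<dots> = (\<Sum>I\<in>Pow N - {{}}. real (n - card I) * g I)"
  proof (intro sum.cong refl)
    fix I assume "I \<in> Pow N - {{}}"
    then have "card (N - I) = n - card I"
      using \<open>finite N\<close> by (auto simp: n_def intro: card_Diff_subset finite_subset)
    moreover have "{i \<in> N. i \<notin> I} = N - I" by auto
    ultimately show "(\<Sum>i\<in>N. if i \<notin> I then g I else 0) = real (n - card I) * g I"
      using \<open>finite N\<close> by (simp flip: sum.inter_filter)
  qed
  finally have "(\<Sum>i\<in>N. set_potential N f - set_potential N (\<lambda>I. f (I - {i})))
      = (\<Sum>I\<in>Pow N - {{}}. (real n * w (card I) - real (n - card I) * (w (card I) + w (card I + 1))) * f I)"
    by (simp add: sum_subtractf set_potential_def n_def w_def g_def sum_distrib_left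
        left_diff_distrib mult.assoc flip: sum.distrib)
  also have "\<dots> = (\<Sum>I\<in>Pow N - {{}}. if I = N then f I else 0)"
  proof (intro sum.cong refl)
    fix I assume I: "I \<in> Pow N - {{}}"
    then have "card I = n \<longleftrightarrow> I = N"
      using \<open>finite N\<close> card_subset_eq[of N I] by (auto simp: n_def)
    then show "(real n * w (card I) - real (n - card I) * (w (card I) + w (card I + 1))) * f I
        = (if I = N then f I else 0)"
      using potential_weight_telescope[OF card_I[OF I]] by (simp add: w_def)
  qed
  also have "\<dots> = f N"
    using \<open>finite N\<close> \<open>f {} = 0\<close> by (simp add: sum.delta)
  finally show ?thesis .
qed

lemma sum_potential_marginals:
  assumes "C {} = 0"
  shows "(\<Sum>i<n. potential n C S - potential n C (S(i := {}))) = C (\<Union>i<n. S i)"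
proof -
  have "(\<Union>j\<in>I. (S(i := {})) j) = (\<Union>j\<in>I - {i}. S j)" for I i by auto
  then show ?thesis
    using sum_set_potential_marginals[of "{..<n}" "\<lambda>I. C (\<Union>j\<in>I. S j)"] assms
    by (simp add: potential_eq_set_potential)
qed

definition indicator_valuation :: "real \<Rightarrow> (nat \<Rightarrow> 'a set) \<Rightarrow> nat \<Rightarrow> 'a set \<Rightarrow> real" where
  "indicator_valuation L S j A = L * real (card (A \<inter> S j))"

lemma additive_valuation_indicator:
  assumes "finite Mi" "0 \<le> L"
  shows "additive_valuation Mi (\<lambda>A. L * real (card (A \<inter> X)))"
  unfolding additive_valuation_def valuation_def
proof (intro conjI allI impI)
  fix A assume "A \<subseteq> Mi"
  then have "finite A" using assms(1) finite_subset by blast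
  have "real (card (A \<inter> X)) = (\<Sum>j\<in>A. real (card ({j} \<inter> X)))"
    using \<open>finite A\<close> by (induction A rule: finite_induct) (auto simp: Int_insert_left)
  then show "L * real (card (A \<inter> X)) = (\<Sum>j\<in>A. L * real (card ({j} \<inter> X)))"
    by (simp add: sum_distrib_left)
next
  fix A B assume "A \<subseteq> B \<and> B \<subseteq> Mi"
  then have "card (A \<inter> X) \<le> card (B \<inter> X)"
    using assms(1) by (intro card_mono) (auto intro: finite_subset)
  then show "L * real (card (A \<inter> X)) \<le> L * real (card (B \<inter> X))"
    using assms(2) by (simp add: mult_left_mono)
qed (use assms(2) in simp_all)

lemma welfare_indicator_valuation:
  "welfare n (indicator_valuation L S) T = L * (\<Sum>j<n. real (card (T j \<inter> S j)))"
  by (simp add: welfare_def indicator_valuation_def sum_distrib_left)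

text \<open>Dropping an item of S loses welfare L, which exceeds the whole of H R: so an allocation
  at least as good as R keeps R, and then it cannot have a larger H.\<close>
lemma indicator_valuation_improvement:
  fixes H :: "(nat \<Rightarrow> 'a set) \<Rightarrow> ereal"
  assumes fin: "\<forall>j<n. finite (S j)"
    and RS: "\<forall>j<n. R j \<subseteq> S j" and TS: "\<forall>j<n. T j \<inter> S j \<subseteq> R j"
    and hR: "H R = ereal h" and "0 \<le> h" "h < L" and "0 \<le> H T"
    and H_mono: "(\<forall>j<n. R j \<subseteq> T j) \<Longrightarrow> H R \<le> H T"
    and better: "objective n H (indicator_valuation L S) R \<le> objective n H (indicator_valuation L S) T"
  shows "(\<forall>j<n. T j \<inter> S j = R j) \<and> H T = H R"
proof -
  define count where "count X = (\<Sum>j<n. card (X j \<inter> S j))" for X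
  have obj: "objective n H (indicator_valuation L S) X = ereal (L * real (count X)) - H X" for X
    by (simp add: objective_def welfare_indicator_valuation count_def)
  have H_T: "ereal (L * real (count R) - h) \<le> ereal (L * real (count T)) - H T"
    using better by (simp add: obj hR)
  have kept: "\<forall>j<n. T j \<inter> S j = R j"
  proof (rule ccontr)
    assume "\<not> (\<forall>j<n. T j \<inter> S j = R j)"
    then obtain j0 where j0: "j0 < n" "T j0 \<inter> S j0 \<subset> R j0 \<inter> S j0" using TS RS by blast
    have "count T < count R" unfolding count_def
    proof (rule sum_strict_mono_ex1)
      show "\<forall>j\<in>{..<n}. card (T j \<inter> S j) \<le> card (R j \<inter> S j)"
        using fin TS by (auto intro!: card_mono)
      show "\<exists>j\<in>{..<n}. card (T j \<inter> S j) < card (R j \<inter> S j)"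
        using j0 fin by (auto intro!: bexI[of _ j0] psubset_card_mono)
    qed simp
    then have "real (count T) + 1 \<le> real (count R)" by linarith
    then have "L * (real (count T) + 1) \<le> L * real (count R)"
      using \<open>0 \<le> h\<close> \<open>h < L\<close> by (intro mult_left_mono) simp_all
    then have "L * real (count T) + L \<le> L * real (count R)" by (simp add: distrib_left)
    then have "ereal (L * real (count T)) < ereal (L * real (count R) - h)"
      using \<open>h < L\<close> by simp
    also have "\<dots> \<le> ereal (L * real (count T))"
      using H_T \<open>0 \<le> H T\<close> by (cases "H T") auto
    finally show False by simp
  qed
  then have "count T = count R" using RS by (simp add: count_def Int_absorb2)
  then have "H T \<le> H R" using H_T \<open>0 \<le> H T\<close> hR by (cases "H T") auto
  moreover have "H R \<le> H T" using kept by (intro H_mono) blast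
  ultimately show ?thesis using kept by simp
qed

lemma le_of_sum_marginals_le:
  fixes P h :: real
  assumes "finite K" "K \<noteq> {}"
    and "(\<Sum>i\<in>K. P - p i) \<le> (\<Sum>i\<in>K. h - q i)" and "\<And>i. i \<in> K \<Longrightarrow> p i \<le> q i"
  shows "P \<le> h"
proof -
  have "real (card K) * (P - h) = (\<Sum>i\<in>K. P - p i) - (\<Sum>i\<in>K. h - q i) + (\<Sum>i\<in>K. p i - q i)"
    by (simp add: sum_subtractf algebra_simps)
  also have "\<dots> \<le> 0"
    using assms(3,4) sum_mono[of K p q] by (simp add: sum_subtractf)
  finally show ?thesis
    using assms(1,2) by (simp add: mult_le_0_iff card_gt_0_iff)
qed

lemma allocs_delete: "S \<in> allocs n M \<Longrightarrow> S(i := {}) \<in> allocs n M"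
  by (auto simp: allocs_def)

locale cost_covering_vcg =
  fixes n :: nat
    and M :: "nat \<Rightarrow> 'a set"
    and C :: "'a set \<Rightarrow> real"
    and H :: "(nat \<Rightarrow> 'a set) \<Rightarrow> ereal"
    and D :: "(nat \<Rightarrow> 'a set \<Rightarrow> real) set"
    and alg :: "(nat \<Rightarrow> 'a set \<Rightarrow> real) \<Rightarrow> (nat \<Rightarrow> 'a set)"
    and alg_minus :: "(nat \<Rightarrow> 'a set \<Rightarrow> real) \<Rightarrow> nat \<Rightarrow> (nat \<Rightarrow> 'a set)"
  assumes fin: "\<And>i. i < n \<Longrightarrow> finite (M i)"
    and cost: "cost_function n M C"
    and H_nonneg: "\<And>S. S \<in> allocs n M \<Longrightarrow> H S \<ge> 0"
    and H_norm: "H empty_alloc = 0"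
    and H_mono: "\<And>S T. S \<in> allocs n M \<Longrightarrow> T \<in> allocs n M \<Longrightarrow>
                   (\<forall>i<n. S i \<subseteq> T i) \<Longrightarrow> H S \<le> H T"
    and D_additive: "\<And>v. (\<forall>i<n. additive_valuation (M i) (v i)) \<Longrightarrow> v \<in> D"
    and alg_max: "\<And>v. v \<in> D \<Longrightarrow> is_maximizer n H v (allocs n M) (alg v)"
    and alg_minus_max: "\<And>v i. v \<in> D \<Longrightarrow> i < n \<Longrightarrow>
                   is_maximizer n H v {S \<in> allocs n M. S i = {}} (alg_minus v i)"
    and covers: "\<And>v. v \<in> D \<Longrightarrow>
                   (\<Sum>i<n. vcg_payment n H v (alg v) (alg_minus v i) i)
                     \<ge> ereal (C (alloc_union n (alg v)))"
begin

lemma finite_alloc: "S \<in> allocs n M \<Longrightarrow> j < n \<Longrightarrow> finite (S j)"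
  using fin finite_subset by (auto simp: allocs_def)

lemma indicator_valuation_in_D: "0 \<le> L \<Longrightarrow> indicator_valuation L S \<in> D"
  unfolding indicator_valuation_def by (auto intro!: D_additive additive_valuation_indicator fin)

lemma H_real_below:
  assumes "S \<in> allocs n M" "T \<in> allocs n M" "\<forall>j<n. T j \<subseteq> S j" "H S = ereal h"
  shows "H T = ereal (real_of_ereal (H T))" "real_of_ereal (H T) \<le> h"
  using H_mono[OF assms(2,1,3)] H_nonneg[OF assms(2)] assms(4) by (cases "H T"; simp)+

lemma maximizer_indicator_valuation:
  assumes X: "is_maximizer n H (indicator_valuation L S) A X"
    and A: "A \<subseteq> allocs n M" "R \<in> A" "\<forall>T\<in>A. \<forall>j<n. T j \<inter> S j \<subseteq> R j"
    and S: "S \<in> allocs n M" "\<forall>j<n. R j \<subseteq> S j"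
    and hR: "H R = ereal h" "h < L"
  shows "(\<forall>j<n. X j \<inter> S j = R j) \<and> H X = H R"
proof (rule indicator_valuation_improvement[where h = h and L = L])
  have "X \<in> A" using X by (simp add: is_maximizer_def)
  then show "0 \<le> H X" "\<forall>j<n. X j \<inter> S j \<subseteq> R j" using A H_nonneg by auto
  show "(\<forall>j<n. R j \<subseteq> X j) \<Longrightarrow> H R \<le> H X" using A \<open>X \<in> A\<close> by (intro H_mono) auto
  show "0 \<le> h" using H_nonneg[of R] A hR by auto
  show "objective n H (indicator_valuation L S) R \<le> objective n H (indicator_valuation L S) X"
    using X A by (simp add: is_maximizer_def)
qed (use S hR finite_alloc in auto)

lemma vcg_allocation_indicator:
  assumes S: "S \<in> allocs n M" and hS: "H S = ereal h" "h < L"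
  defines "v \<equiv> indicator_valuation L S"
  shows "v \<in> D" and "(\<forall>j<n. alg v j \<inter> S j = S j) \<and> H (alg v) = H S"
proof -
  show vD: "v \<in> D" using H_nonneg[OF S] hS by (simp add: v_def indicator_valuation_in_D)
  have "is_maximizer n H (indicator_valuation L S) (allocs n M) (alg v)"
    using alg_max[OF vD] by (simp add: v_def)
  then show "(\<forall>j<n. alg v j \<inter> S j = S j) \<and> H (alg v) = H S"
    using S hS by (intro maximizer_indicator_valuation) auto
qed

lemma vcg_payment_indicator:
  assumes S: "S \<in> allocs n M" and hS: "H S = ereal h" "h < L" and i: "i < n"
  defines "v \<equiv> indicator_valuation L S"
  shows "vcg_payment n H v (alg v) (alg_minus v i) i = ereal (h - real_of_ereal (H (S(i := {}))))"
proof -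
  have Si: "S(i := {}) \<in> allocs n M" using S by (rule allocs_delete)
  define hi where "hi = real_of_ereal (H (S(i := {})))"
  have hi: "H (S(i := {})) = ereal hi" "hi \<le> h"
    using H_real_below[OF S Si _ hS(1)] by (auto simp: hi_def)
  have vD: "v \<in> D" using vcg_allocation_indicator(1)[OF S hS] by (simp add: v_def)
  have max_i: "is_maximizer n H (indicator_valuation L S) {T \<in> allocs n M. T i = {}} (alg_minus v i)"
    using alg_minus_max[OF vD i] by (simp add: v_def)
  have "(\<forall>j<n. alg_minus v i j \<inter> S j = (S(i := {})) j) \<and> H (alg_minus v i) = H (S(i := {}))"
    using S Si hi hS by (intro maximizer_indicator_valuation[OF max_i, where h = hi]) (auto simp: fun_upd_def)
  moreover have "(\<forall>j<n. alg v j \<inter> S j = S j) \<and> H (alg v) = H S"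
    using vcg_allocation_indicator(2)[OF S hS] by (simp add: v_def)
  moreover have "(\<Sum>j<n. real (card ((S(i := {})) j))) = (\<Sum>j\<in>{..<n} - {i}. real (card (S j)))"
    using i by (simp add: sum.remove)
  ultimately show ?thesis
    using hS hi
    by (simp add: vcg_payment_def v_def welfare_indicator_valuation indicator_valuation_def
        sum_distrib_left)
qed

lemma cost_le_sum_marginal_H:
  assumes S: "S \<in> allocs n M" and hS: "H S = ereal h"
  shows "C (\<Union>i<n. S i) \<le> (\<Sum>i<n. h - real_of_ereal (H (S(i := {}))))"
proof -
  define v where "v = indicator_valuation (h + 1) S"
  have vD: "v \<in> D" and kept: "\<forall>j<n. alg v j \<inter> S j = S j"
    using vcg_allocation_indicator[OF S hS, of "h + 1"] by (simp_all add: v_def)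
  have "alg v \<in> allocs n M" using alg_max[OF vD] by (simp add: is_maximizer_def)
  then have "(\<Union>i<n. S i) \<subseteq> alloc_union n (alg v)" "alloc_union n (alg v) \<subseteq> (\<Union>i<n. M i)"
    using kept unfolding alloc_union_def allocs_def by blast+
  then have "C (\<Union>i<n. S i) \<le> C (alloc_union n (alg v))"
    using cost by (simp add: cost_function_def)
  also have "ereal \<dots> \<le> (\<Sum>i<n. vcg_payment n H v (alg v) (alg_minus v i) i)"
    using covers[OF vD] .
  also have "\<dots> = ereal (\<Sum>i<n. h - real_of_ereal (H (S(i := {}))))"
    using vcg_payment_indicator[OF S hS, of "h + 1"] by (simp add: v_def)
  finally show ?thesis by simp
qed

lemma potential_le_H:
  assumes "S \<in> allocs n M"
  shows "ereal (potential n C S) \<le> H S"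
  using assms
proof (induction "card {i. i < n \<and> S i \<noteq> {}}" arbitrary: S rule: less_induct)
  case less
  define K where "K = {i. i < n \<and> S i \<noteq> {}}"
  have C_empty: "C {} = 0" using cost by (simp add: cost_function_def)
  show ?case
  proof (cases "H S")
    case MInf
    then show ?thesis using H_nonneg[OF less.prems] by simp
  next
    case PInf
    then show ?thesis by simp
  next
    case (real h)
    show ?thesis
    proof (cases "K = {}")
      case True
      have "S i = {}" for i
        using True less.prems by (cases "i < n") (auto simp: K_def allocs_def)
      then have "S = empty_alloc" by (auto simp: empty_alloc_def)
      then show ?thesis using H_norm by (simp add: potential_def empty_alloc_def C_empty)
    next
      case False
      define hi where "hi i = real_of_ereal (H (S(i := {})))" for i
      have restrict: "(\<Sum>i<n. f i) = (\<Sum>i\<in>K. f i)" if "\<And>i. i < n \<Longrightarrow> i \<notin> K \<Longrightarrow> f i = 0"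
        for f :: "nat \<Rightarrow> real"
        using that by (intro sum.mono_neutral_right) (auto simp: K_def)
      have unchanged: "S(i := {}) = S" if "i \<notin> K" for i
        using that less.prems by (auto simp: K_def allocs_def not_less fun_upd_idem_iff)
      have "(\<Sum>i\<in>K. potential n C S - potential n C (S(i := {}))) = C (\<Union>i<n. S i)"
        using sum_potential_marginals[of C n S, OF C_empty] unchanged by (simp add: restrict)
      also have "\<dots> \<le> (\<Sum>i\<in>K. h - hi i)"
        using cost_le_sum_marginal_H[OF less.prems real] unchanged real
        by (simp add: restrict hi_def)
      finally have marginals: "(\<Sum>i\<in>K. potential n C S - potential n C (S(i := {})))
          \<le> (\<Sum>i\<in>K. h - hi i)" .
      have IH: "potential n C (S(i := {})) \<le> hi i" if "i \<in> K" for i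
      proof -
        have Si: "S(i := {}) \<in> allocs n M" using less.prems by (rule allocs_delete)
        have "card (K - {i}) < card K" using that by (intro card_Diff1_less) (simp_all add: K_def)
        moreover have "{j. j < n \<and> (S(i := {})) j \<noteq> {}} = K - {i}" by (auto simp: K_def)
        ultimately have "card {j. j < n \<and> (S(i := {})) j \<noteq> {}} < card {j. j < n \<and> S j \<noteq> {}}"
          by (simp add: K_def)
        then have "ereal (potential n C (S(i := {}))) \<le> H (S(i := {}))"
          using less.hyps Si by blast
        also have "\<dots> = ereal (hi i)"
          using H_real_below(1)[OF less.prems Si _ real] by (simp add: hi_def)
        finally show ?thesis by simp
      qed
      have "finite K" by (simp add: K_def)
      then have "potential n C S \<le> h" using False marginals IH by (rule le_of_sum_marginals_le)
      then show ?thesis using real by simp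
    qed
  qed
qed

end

theorem theorem5p3:
  fixes n :: nat
    and M :: "nat \<Rightarrow> 'a set"
    and C :: "'a set \<Rightarrow> real"
    and H :: "(nat \<Rightarrow> 'a set) \<Rightarrow> ereal"
    and D :: "(nat \<Rightarrow> 'a set \<Rightarrow> real) set"
    and alg :: "(nat \<Rightarrow> 'a set \<Rightarrow> real) \<Rightarrow> (nat \<Rightarrow> 'a set)"
    and alg_minus :: "(nat \<Rightarrow> 'a set \<Rightarrow> real) \<Rightarrow> nat \<Rightarrow> (nat \<Rightarrow> 'a set)"
  assumes fin: "\<And>i. i < n \<Longrightarrow> finite (M i)"
    and disj: "\<And>i j. i < n \<Longrightarrow> j < n \<Longrightarrow> i \<noteq> j \<Longrightarrow> M i \<inter> M j = {}"
    and cost: "cost_function n M C"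
    and H_nonneg: "\<And>S. S \<in> allocs n M \<Longrightarrow> H S \<ge> 0"
    and H_norm: "H empty_alloc = 0"
    and H_mono: "\<And>S T. S \<in> allocs n M \<Longrightarrow> T \<in> allocs n M \<Longrightarrow>
                   (\<forall>i<n. S i \<subseteq> T i) \<Longrightarrow> H S \<le> H T"
    and D_valid: "\<And>v i. v \<in> D \<Longrightarrow> i < n \<Longrightarrow> valuation (M i) (v i)"
    and D_additive: "\<And>v. (\<forall>i<n. additive_valuation (M i) (v i)) \<Longrightarrow> v \<in> D"
    and alg_max: "\<And>v. v \<in> D \<Longrightarrow> is_maximizer n H v (allocs n M) (alg v)"
    and alg_minus_max: "\<And>v i. v \<in> D \<Longrightarrow> i < n \<Longrightarrow>
                   is_maximizer n H v {S \<in> allocs n M. S i = {}} (alg_minus v i)"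
    and covers: "\<And>v. v \<in> D \<Longrightarrow>
                   (\<Sum>i<n. vcg_payment n H v (alg v) (alg_minus v i) i)
                     \<ge> ereal (C (alloc_union n (alg v)))"
  shows "\<forall>S \<in> allocs n M. H S \<ge> ereal (potential n C S)"
proof -
  interpret cost_covering_vcg n M C H D alg alg_minus
    by unfold_locales (fact fin cost H_nonneg H_norm H_mono D_additive alg_max alg_minus_max covers)+
  show ?thesis using potential_le_H by blast
qed

end
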